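(* In the setting below, $(K,\mathbb{V})$ is a symmetric decomposition of the kernel $Q$ of the Unweighted Graph Sampler on $\mathcal{G}$, i.e. for every $G\in\mathcal{G}$ and $z\in\mathcal{Z}$, $\mathbb{V}_G(z)=\mathbb{V}_{G^*}(z)$ for every $G^*$ with $K_z(G,G^* )>0$; and each $K_z\in K$ is reversible with respect to the uniform distribution on $\mathcal{G}$ (indeed $K_z(G,G^* )=K_z(G^*,G)$ for all $G,G^*\in\mathcal{G}$).
   Context: Setting (unweighted graphs). $V$ is a finite vertex set; graphs are either all directed or all undirected with no multiple edges; $uv$ denotes the possible edge from $u$ to $v$ ($uv=vu$ if undirected). $G_0$ is a given graph on $V$ and $\mathcal{F}$ a given set of possible edges. $\mathcal{G}$ is the set of graphs $G$ on $V$ with the same degree sequence as $G_0$ (in- and out-degrees if directed) and $E(G)\cap\mathcal{F}=E(G_0)\cap\mathcal{F}$. $\tilde{\mathcal{F}}$ is the set of possible edges $uv$ that are present in every $G\in\mathcal{G}$ or absent from every $G\in\mathcal{G}$. $N_G(u)=\{v: vu\in E(G), vu\notin\tilde{\mathcal{F}}\}$, $M_G(u)=\{v: uv\notin E(G), uv\notin\tilde{\mathcal{F}}\}$. Unweighted Graph Sampler (one iteration from $G$): $W_{-1}=*$; $W_0\sim$ Uniform$\{v: N_G(v)\ne\emptyset\}$; $n=0$; repeat [$W_{n+1}\sim$ Uniform$(N_G(W_n)\setminus\{W_{n-1}\})$; $W_{n+2}\sim$ Uniform$(M_G(W_{n+1}))$; remove $W_{n+1}W_n$ from and add $W_{n+1}W_{n+2}$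 to the current graph; $n\leftarrow n+2$] until $W_n=W_0$; output the current graph. $Q$ denotes the Markov kernel on $\mathcal{G}$ of this procedure. The sampled sequence $W$ has the form $w_0w_1\cdots w_kw_0$ with $k$ odd; $\mathcal{W}$ is the set of such sequences. Swaps: $a_1b_1\leftrightarrow a_2b_2$ replaces edge $a_1b_1$ with $a_2b_2$; it is viable iff $a_1b_1$ is an edge, $a_2b_2$ is not, and neither lies in $\mathcal{F}$. The swaps corresponding to $w=w_0\cdots w_kw_0$ are $w_1w_0\leftrightarrow w_1w_2, w_3w_2\leftrightarrow w_3w_4,\dots,w_kw_{k-1}\leftrightarrow w_kw_0$ applied in order; they are viable iff each is viable when applied iteratively. $w^r$ denotes the reverse sequence. Kernels: two sequences in $\mathcal{W}$ are equivalent iff identical or each other's reverse; $\mathcal{Z}$ is the set of equivalence classes. For $z\in\mathcal{Z}$ with representative $w$, $K_z$ is the deterministic kernel on $\mathcal{G}$ which from $G$ performs the swaps corresponding to $w$ if viable; otherwise performs those corresponding to $w^r$ if viable; otherwise leaves $G$ unchanged (this does not depend on the representative). $K=\{K_z\}$. $\mathbb{V}_G(z)$ is the probability that the sequence $W$ sampled by the Unweighted Graph Sampler from $G$ lies in $z$ (i.e. equals $w$ or $w^r$). A decomposition $(K,\mathbb{V})$ of $Q$ means $Q(G,\cdot)=\sum_z \mathbb{V}_G(z)K_z(G,\cdot)$; it is symmetric if $\mathbb{V}_G(z)=\mathbb{V}_{G^*}(z)$ whenever $K_z(G,G^* )>0$. *)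

theory Defs
  imports "HOL-Analysis.Analysis"
begin

text \<open>Vertex set V = UNIV of a finite type 'v. The Boolean d
says whether graphs are directed; for undirected graphs the edge set is symmetric,
so uv and vu denote the same edge.\<close>

type_synonym 'v graph = "('v \<times> 'v) set"

definition is_graph :: "bool \<Rightarrow> ('v::finite) graph \<Rightarrow> bool" where
  "is_graph d E \<longleftrightarrow> (\<forall>(u,v)\<in>E. u \<noteq> v) \<and> (\<not> d \<longrightarrow> sym E)"

definition outdeg :: "('v::finite) graph \<Rightarrow> 'v \<Rightarrow> nat" where
  "outdeg E u = card {v. (u,v) \<in> E}"

definition indeg :: "('v::finite) graph \<Rightarrow> 'v \<Rightarrow> nat" where
  "indeg E u = card {v. (v,u) \<in> E}"

definition Gset :: "bool \<Rightarrow> ('v::finite) graph \<Rightarrow> 'v graph \<Rightarrow> 'v graph set" where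
  "Gset d G0 F = {G. is_graph d G \<and> (\<forall>u. outdeg G u = outdeg G0 u \<and> indeg G u = indeg G0 u)
                     \<and> G \<inter> F = G0 \<inter> F}"

definition Ftil :: "bool \<Rightarrow> ('v::finite) graph \<Rightarrow> 'v graph \<Rightarrow> ('v \<times> 'v) set" where
  "Ftil d G0 F = {(u,v). u \<noteq> v \<and> ((\<forall>G\<in>Gset d G0 F. (u,v) \<in> G) \<or> (\<forall>G\<in>Gset d G0 F. (u,v) \<notin> G))}"

definition Nset :: "bool \<Rightarrow> ('v::finite) graph \<Rightarrow> 'v graph \<Rightarrow> 'v graph \<Rightarrow> 'v \<Rightarrow> 'v set" where
  "Nset d G0 F G u = {v. (v,u) \<in> G \<and> (v,u) \<notin> Ftil d G0 F}"

definition Mset :: "bool \<Rightarrow> ('v::finite) graph \<Rightarrow> 'v graph \<Rightarrow> 'v graph \<Rightarrow> 'v \<Rightarrow> 'v set" where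
  "Mset d G0 F G u = {v. v \<noteq> u \<and> (u,v) \<notin> G \<and> (u,v) \<notin> Ftil d G0 F}"

definition ekey :: "bool \<Rightarrow> 'v \<Rightarrow> 'v \<Rightarrow> ('v \<times> 'v) set" where
  "ekey d u v = (if d then {(u,v)} else {(u,v),(v,u)})"

definition swapg :: "bool \<Rightarrow> 'v graph \<Rightarrow> 'v \<Rightarrow> 'v \<Rightarrow> 'v \<Rightarrow> 'v graph" where
  "swapg d G a x b = (G - ekey d a x) \<union> ekey d a b"

text \<open>Probability that, from graph G with previous vertex prev and current vertex x,
the remaining sampled sequence is exactly the list given (with target w0).\<close>
fun walkp :: "bool \<Rightarrow> ('v::finite) graph \<Rightarrow> 'v graph \<Rightarrow> 'v \<Rightarrow> 'v graph \<Rightarrow> 'v option \<Rightarrow> 'v \<Rightarrow> 'v list \<Rightarrow> real" where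
  "walkp d G0 F w0 G prev x (a # b # rest) =
     (let S = Nset d G0 F G x - set_option prev; M = Mset d G0 F G a in
       of_bool (a \<in> S) / real (card S) * (of_bool (b \<in> M) / real (card M)) *
       (if rest = [] then of_bool (b = w0)
        else of_bool (b \<noteq> w0) * walkp d G0 F w0 (swapg d G a x b) (Some a) b rest))"
| "walkp d G0 F w0 G prev x _ = 0"

text \<open>Probability that the Unweighted Graph Sampler run from G samples the sequence w.\<close>
definition Pw :: "bool \<Rightarrow> ('v::finite) graph \<Rightarrow> 'v graph \<Rightarrow> 'v graph \<Rightarrow> 'v list \<Rightarrow> real" where
  "Pw d G0 F G w = (case w of [] \<Rightarrow> 0
     | w0 # rest \<Rightarrow> (let St = {v. Nset d G0 F G v \<noteq> {}} in
          of_bool (w0 \<in> St) / real (card St) * walkp d G0 F w0 G None w0 rest))"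

fun apply_swaps :: "bool \<Rightarrow> 'v graph \<Rightarrow> 'v list \<Rightarrow> 'v graph" where
  "apply_swaps d G (x # a # b # rest) = apply_swaps d (swapg d G a x b) (b # rest)"
| "apply_swaps d G _ = G"

definition viable :: "('v \<times> 'v) set \<Rightarrow> 'v graph \<Rightarrow> 'v \<Rightarrow> 'v \<Rightarrow> 'v \<Rightarrow> 'v \<Rightarrow> bool" where
  "viable F G a1 b1 a2 b2 \<longleftrightarrow> (a1,b1) \<in> G \<and> (a2,b2) \<notin> G \<and> (a1,b1) \<notin> F \<and> (a2,b2) \<notin> F \<and> a2 \<noteq> b2"

fun viable_seq :: "bool \<Rightarrow> ('v \<times> 'v) set \<Rightarrow> 'v graph \<Rightarrow> 'v list \<Rightarrow> bool" where
  "viable_seq d F G (x # a # b # rest) =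
     (viable F G a x a b \<and> viable_seq d F (swapg d G a x b) (b # rest))"
| "viable_seq d F G _ = True"

definition Wset :: "'v list set" where
  "Wset = {w. length w \<ge> 3 \<and> odd (length w) \<and> hd w = last w}"

definition Zset :: "'v list set set" where
  "Zset = {{w, rev w} | w. w \<in> Wset}"

definition Kmap_w :: "bool \<Rightarrow> ('v \<times> 'v) set \<Rightarrow> 'v list \<Rightarrow> 'v graph \<Rightarrow> 'v graph" where
  "Kmap_w d F w G = (if viable_seq d F G w then apply_swaps d G w
                     else if viable_seq d F G (rev w) then apply_swaps d G (rev w) else G)"

definition Kz :: "bool \<Rightarrow> ('v \<times> 'v) set \<Rightarrow> 'v list set \<Rightarrow> 'v graph \<Rightarrow> 'v graph \<Rightarrow> real" where
  "Kz d F z G G' = of_bool (Kmap_w d F (SOME w. w \<in> z) G = G')"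

definition Vp :: "bool \<Rightarrow> ('v::finite) graph \<Rightarrow> 'v graph \<Rightarrow> 'v graph \<Rightarrow> 'v list set \<Rightarrow> real" where
  "Vp d G0 F G z = (\<Sum>w\<in>z. Pw d G0 F G w)"

definition Qk :: "bool \<Rightarrow> ('v::finite) graph \<Rightarrow> 'v graph \<Rightarrow> 'v graph \<Rightarrow> 'v graph \<Rightarrow> real" where
  "Qk d G0 F G G' = (\<Sum>\<^sub>\<infinity> w\<in>Wset. Pw d G0 F G w * of_bool (apply_swaps d G w = G'))"

end

theory Submission
  imports Defs
begin

text \<open>A viable sequence of swaps determines the status of every edge it touches. Hence it cannot be
  viable both from \<open>G\<close> and from its result \<open>G*\<close>, nor can \<open>w\<close> and \<open>w\<^sup>r\<close> both be viable from
  \<open>G\<close>, unless \<open>G* = G\<close>; while \<open>w\<^sup>r\<close> is always viable from \<open>G*\<close> and leads back to \<open>G\<close>. So every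
  \<open>K\<^sub>z\<close> is an involution, which is its symmetry.

  For the decomposition, the probability of sampling \<open>w\<close> from \<open>G\<close> is a product of reciprocal sizes of
  the sets \<open>N\<close> and \<open>M\<close> along the walk, and the reversed walk from \<open>G*\<close> meets the same sizes:
  each swap moves one unit of in-degree from one walk vertex to the next, so a closed walk leaves all
  sizes \<open>|N(u)|\<close> unchanged. Thus \<open>P\<^sub>G(w) = P\<^sub>G\<^sub>*(w\<^sup>r)\<close>, which together with the first
  paragraph gives \<open>\<bbbV>\<^sub>G(z) = \<bbbV>\<^sub>G\<^sub>*(z)\<close>; splitting the sum defining \<open>Q\<close> over the classes
  \<open>{w, w\<^sup>r}\<close> gives the decomposition.\<close>

section \<open>Swaps along a sequence\<close>

lemma is_graph_swapg:
  assumes "is_graph d G" "a \<noteq> b"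
  shows "is_graph d (swapg d G a x b)"
proof (cases d)
  case True
  then show ?thesis using assms unfolding is_graph_def swapg_def ekey_def by auto
next
  case False
  then have G: "sym G" "\<forall>(u,v)\<in>G. u \<noteq> v" using assms unfolding is_graph_def by auto
  have "sym (swapg d G a x b)"
    by (rule symI) (use G(1) False in \<open>auto simp: swapg_def ekey_def dest: symD\<close>)
  moreover have "\<forall>(u,v)\<in>swapg d G a x b. u \<noteq> v"
    using G(2) assms(2) False unfolding swapg_def ekey_def by auto
  ultimately show ?thesis using False unfolding is_graph_def by simp
qed

lemma viable_swapD:
  assumes "is_graph d G" "viable F G a x a b"
  shows "(a,x) \<in> G" "(a,b) \<notin> G" "(a,x) \<notin> F" "(a,b) \<notin> F" "a \<noteq> b" "a \<noteq> x" "x \<noteq> b"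
    "\<not> d \<Longrightarrow> (x,a) \<in> G" "\<not> d \<Longrightarrow> (b,a) \<notin> G"
  using assms unfolding viable_def is_graph_def by (auto dest: symD)

lemma swapg_undo:
  assumes "is_graph d G" "viable F G a x a b"
  shows "swapg d (swapg d G a x b) a b x = G" "viable F (swapg d G a x b) a b a x"
  using viable_swapD[OF assms] unfolding viable_def swapg_def ekey_def by (cases d; auto)+

lemma mem_swapg_iff:
  "p \<in> swapg d G a x b \<longleftrightarrow> (p \<in> G \<and> p \<notin> ekey d a x) \<or> p \<in> ekey d a b"
  unfolding swapg_def by auto

lemma viable_seq_snoc:
  "odd (length l) \<Longrightarrow>
   viable_seq d F G (l @ [a, c]) \<longleftrightarrow> viable_seq d F G l \<and> viable F (apply_swaps d G l) a (last l) a c"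
proof (induction l arbitrary: G rule: induct_list012)
  case (3 x y zs)
  then obtain b rest where "zs = b # rest" by (cases zs) simp_all
  with 3 show ?case by simp
qed simp_all

lemma apply_swaps_snoc:
  "odd (length l) \<Longrightarrow> apply_swaps d G (l @ [a, c]) = swapg d (apply_swaps d G l) a (last l) c"
proof (induction l arbitrary: G rule: induct_list012)
  case (3 x y zs)
  then obtain b rest where "zs = b # rest" by (cases zs) simp_all
  with 3 show ?case by simp
qed simp_all

fun swap_edges :: "bool \<Rightarrow> 'v list \<Rightarrow> ('v \<times> 'v) set" where
  "swap_edges d (x # a # b # rest) = ekey d a x \<union> ekey d a b \<union> swap_edges d (b # rest)"
| "swap_edges d _ = {}"

lemma swap_edges_snoc:
  "odd (length l) \<Longrightarrow> swap_edges d (l @ [a, c]) = swap_edges d l \<union> ekey d a (last l) \<union> ekey d a c"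
proof (induction l rule: induct_list012)
  case (3 x y zs)
  then obtain b rest where "zs = b # rest" by (cases zs) simp_all
  with 3 show ?case by auto
qed simp_all

lemma swap_edges_rev: "odd (length w) \<Longrightarrow> swap_edges d (rev w) = swap_edges d w"
proof (induction w rule: induct_list012)
  case (3 x y zs)
  then obtain b rest where zs: "zs = b # rest" by (cases zs) simp_all
  have "odd (length (rev zs))" "last (rev zs) = b" using 3(3) zs by simp_all
  then have "swap_edges d (rev zs @ [y, x]) = swap_edges d zs \<union> ekey d y b \<union> ekey d y x"
    using 3 by (simp add: swap_edges_snoc)
  then show ?case using zs by auto
qed simp_all

lemma apply_swaps_reverse:
  "odd (length w) \<Longrightarrow> is_graph d G \<Longrightarrow> viable_seq d F G w \<Longrightarrow>
   is_graph d (apply_swaps d G w) \<and> viable_seq d F (apply_swaps d G w) (rev w) \<and>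
   apply_swaps d (apply_swaps d G w) (rev w) = G"
proof (induction w arbitrary: G rule: induct_list012)
  case (3 x y zs)
  then obtain b rest where zs: "zs = b # rest" by (cases zs) simp_all
  define G1 where "G1 = swapg d G y x b"
  define H where "H = apply_swaps d G1 zs"
  have v: "viable F G y x y b" and vz: "viable_seq d F G1 zs"
    using 3(5) zs unfolding G1_def by simp_all
  have "is_graph d G1" unfolding G1_def using is_graph_swapg[OF 3(4)] v by (auto simp: viable_def)
  then have IH: "is_graph d H" "viable_seq d F H (rev zs)" "apply_swaps d H (rev zs) = G1"
    using 3(1)[of G1] 3(3) vz unfolding H_def by simp_all
  have undo: "swapg d G1 y b x = G" "viable F G1 y b y x"
    using swapg_undo[OF 3(4) v] unfolding G1_def by auto
  have "odd (length (rev zs))" "last (rev zs) = b" using 3(3) zs by simp_all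
  then have "viable_seq d F H (rev zs @ [y, x]) \<and> apply_swaps d H (rev zs @ [y, x]) = G"
    using IH undo by (simp add: viable_seq_snoc apply_swaps_snoc)
  moreover have "apply_swaps d G (x # y # zs) = H" unfolding H_def G1_def zs by simp
  ultimately show ?case using IH(1) by simp
qed simp_all

lemma apply_swaps_outside_swap_edges:
  "p \<notin> swap_edges d w \<Longrightarrow> p \<in> apply_swaps d G w \<longleftrightarrow> p \<in> G"
proof (induction w arbitrary: G rule: induct_list012)
  case (3 x y zs)
  then show ?case by (cases zs) (auto simp: mem_swapg_iff)
qed simp_all

text \<open>The first swap touching an edge fixes whether it is present before it.\<close>
lemma viable_seq_agree_on_swap_edges:
  "is_graph d G \<Longrightarrow> is_graph d G' \<Longrightarrow> viable_seq d F G w \<Longrightarrow> viable_seq d F G' w \<Longrightarrow>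
   p \<in> swap_edges d w \<Longrightarrow> p \<in> G \<longleftrightarrow> p \<in> G'"
proof (induction w arbitrary: G G' rule: induct_list012)
  case (3 x y zs)
  obtain b rest where zs: "zs = b # rest" using 3(7) by (cases zs) auto
  have v: "viable F G y x y b" "viable F G' y x y b"
    and vz: "viable_seq d F (swapg d G y x b) zs" "viable_seq d F (swapg d G' y x b) zs"
    using 3(5,6) zs by auto
  have g: "is_graph d (swapg d G y x b)" "is_graph d (swapg d G' y x b)"
    using is_graph_swapg 3(3,4) v by (auto simp: viable_def)
  show ?case
  proof (cases "p \<in> ekey d y x \<union> ekey d y b")
    case True
    then show ?thesis using viable_swapD[OF 3(3) v(1)] viable_swapD[OF 3(4) v(2)]
      by (cases d) (auto simp: ekey_def)
  next
    case False
    then have "p \<in> swap_edges d zs" using 3(7) zs by auto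
    from 3(1)[OF g vz this] False show ?thesis by (auto simp: mem_swapg_iff)
  qed
qed simp_all

lemma apply_swaps_eq_self:
  assumes "odd (length w)" "is_graph d G" "viable_seq d F G w"
    and "viable_seq d F G v" "viable_seq d F (apply_swaps d G w) v" "swap_edges d v = swap_edges d w"
  shows "apply_swaps d G w = G"
proof (rule set_eqI)
  fix p
  have "is_graph d (apply_swaps d G w)" using apply_swaps_reverse assms(1-3) by blast
  then show "p \<in> apply_swaps d G w \<longleftrightarrow> p \<in> G"
    using viable_seq_agree_on_swap_edges[OF assms(2) _ assms(4,5), of p]
      apply_swaps_outside_swap_edges[of p d w G] assms(6) by blast
qed

lemma apply_swaps_eq_self_if_viable_twice:
  assumes "odd (length w)" "is_graph d G" "viable_seq d F G w" "viable_seq d F (apply_swaps d G w) w"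
  shows "apply_swaps d G w = G"
  using apply_swaps_eq_self[OF assms(1-3,3,4)] by simp

lemma apply_swaps_eq_self_if_viable_rev:
  assumes "odd (length w)" "is_graph d G" "viable_seq d F G w" "viable_seq d F G (rev w)"
  shows "apply_swaps d G w = G"
  using apply_swaps_eq_self[OF assms] apply_swaps_reverse[OF assms(1-3)] swap_edges_rev[OF assms(1)]
  by blast

section \<open>The kernels \<open>K\<^sub>z\<close>\<close>

lemma Kmap_w_involution:
  assumes "odd (length w)" "is_graph d G"
  shows "Kmap_w d F w (Kmap_w d F w G) = G"
proof (cases "viable_seq d F G w")
  case True
  note R = apply_swaps_reverse[OF assms True]
  show ?thesis
  proof (cases "viable_seq d F (apply_swaps d G w) w")
    case True
    with apply_swaps_eq_self_if_viable_twice[OF assms \<open>viable_seq d F G w\<close>]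
    show ?thesis by (simp add: Kmap_w_def)
  next
    case False
    with R \<open>viable_seq d F G w\<close> show ?thesis by (simp add: Kmap_w_def)
  qed
next
  case False
  moreover have "odd (length (rev w))" using assms(1) by simp
  ultimately show ?thesis
    using apply_swaps_reverse[of "rev w" d G F] assms(2) by (auto simp: Kmap_w_def)
qed

lemma Kmap_w_viable:
  assumes "odd (length w)" "is_graph d G" "viable_seq d F G w"
  shows "Kmap_w d F w G = apply_swaps d G w" "Kmap_w d F (rev w) G = apply_swaps d G w"
proof -
  show "Kmap_w d F w G = apply_swaps d G w" using assms unfolding Kmap_w_def by simp
  have "apply_swaps d G (rev w) = G \<and> apply_swaps d G w = G" if "viable_seq d F G (rev w)"
    using apply_swaps_eq_self_if_viable_rev[of w d G F] apply_swaps_eq_self_if_viable_rev[of "rev w" d G F]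
      assms that by simp
  then show "Kmap_w d F (rev w) G = apply_swaps d G w" using assms unfolding Kmap_w_def by auto
qed

lemma Wset_rev: "w \<in> Wset \<Longrightarrow> rev w \<in> Wset"
  unfolding Wset_def by (simp add: hd_rev last_rev)

lemma odd_length_Wset: "w \<in> Wset \<Longrightarrow> odd (length w)"
  unfolding Wset_def by simp

lemma Zset_memD:
  assumes "z \<in> Zset" "w \<in> z"
  shows "w \<in> Wset" "z = {w, rev w}"
proof -
  obtain v where "z = {v, rev v}" "v \<in> Wset" using assms(1) unfolding Zset_def by blast
  then show "w \<in> Wset" "z = {w, rev w}" using assms(2) Wset_rev by auto
qed

lemma some_mem_Zset: "z \<in> Zset \<Longrightarrow> (SOME w. w \<in> z) \<in> z"
  unfolding Zset_def by (metis (mono_tags, lifting) insertI1 mem_Collect_eq someI_ex)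

lemma Wset_eq_Union_Zset: "Wset = \<Union>Zset"
proof
  show "Wset \<subseteq> \<Union>Zset" unfolding Zset_def by blast
  show "\<Union>Zset \<subseteq> Wset" using Zset_memD(1) by blast
qed

lemma disjoint_Zset: "disjoint_family_on (\<lambda>z. z) Zset"
  unfolding disjoint_family_on_def
proof (intro ballI impI)
  fix z z' assume "z \<in> Zset" "z' \<in> Zset" "z \<noteq> z'"
  then show "z \<inter> z' = {}" using Zset_memD(2) by blast
qed

lemma finite_Zset_mem: "z \<in> Zset \<Longrightarrow> finite z"
  unfolding Zset_def by auto

lemma Kz_sym:
  assumes "z \<in> Zset" "is_graph d G" "is_graph d G'"
  shows "Kz d F z G G' = Kz d F z G' G"
proof -
  define w where "w = (SOME w. w \<in> z)"
  have "odd (length w)"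
    using Zset_memD(1)[OF assms(1) some_mem_Zset[OF assms(1)]] odd_length_Wset unfolding w_def by blast
  then have "Kmap_w d F w G = G' \<longleftrightarrow> Kmap_w d F w G' = G"
    using Kmap_w_involution assms(2,3) by metis
  then show ?thesis unfolding Kz_def w_def by simp
qed

lemma Kmap_w_cases:
  assumes "z \<in> Zset" "Kmap_w d F (SOME w. w \<in> z) G = G'" "G' \<noteq> G"
  obtains v where "v \<in> z" "viable_seq d F G v" "G' = apply_swaps d G v"
proof -
  define w where "w = (SOME w. w \<in> z)"
  have w: "w \<in> z" "rev w \<in> z"
    using Zset_memD(2)[OF assms(1)] some_mem_Zset[OF assms(1)] unfolding w_def by auto
  consider "viable_seq d F G w" | "\<not> viable_seq d F G w" "viable_seq d F G (rev w)"
    using assms(2,3) unfolding Kmap_w_def w_def[symmetric] by argo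
  then show ?thesis
  proof cases
    case 1
    then show ?thesis using that w(1) assms(2) unfolding Kmap_w_def w_def[symmetric] by simp
  next
    case 2
    then show ?thesis using that w(2) assms(2) unfolding Kmap_w_def w_def[symmetric] by simp
  qed
qed

section \<open>Sampling probabilities\<close>

definition step_prob :: "bool \<Rightarrow> ('v::finite) graph \<Rightarrow> 'v graph \<Rightarrow> 'v graph \<Rightarrow> 'v option \<Rightarrow> 'v \<Rightarrow> 'v \<Rightarrow> 'v \<Rightarrow> real" where
  "step_prob d G0 F G p x a b = (let S = Nset d G0 F G x - set_option p; M = Mset d G0 F G a in
     of_bool (a \<in> S) / real (card S) * (of_bool (b \<in> M) / real (card M)))"

fun walk_weight :: "bool \<Rightarrow> ('v::finite) graph \<Rightarrow> 'v graph \<Rightarrow> 'v graph \<Rightarrow> 'v option \<Rightarrow> 'v \<Rightarrow> 'v list \<Rightarrow> real" where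
  "walk_weight d G0 F G p x (a # b # rest) =
     step_prob d G0 F G p x a b * walk_weight d G0 F (swapg d G a x b) (Some a) b rest"
| "walk_weight d G0 F G p x _ = 1"

fun returns_only_at_end :: "'v \<Rightarrow> 'v list \<Rightarrow> bool" where
  "returns_only_at_end w0 (a # b # rest) =
     (if rest = [] then b = w0 else b \<noteq> w0 \<and> returns_only_at_end w0 rest)"
| "returns_only_at_end w0 _ = False"

lemma walkp_eq_walk_weight:
  "walkp d G0 F w0 G p x l = of_bool (returns_only_at_end w0 l) * walk_weight d G0 F G p x l"
proof (induction d G0 F w0 G p x l rule: walkp.induct)
  case (1 d G0 F w0 G prev x a b rest)
  then show ?case by (cases "rest = []") (simp_all add: step_prob_def Let_def)
qed simp_all

fun evens :: "'a list \<Rightarrow> 'a list" where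
  "evens (x # y # rest) = x # evens rest"
| "evens xs = xs"

lemma evens_Cons_neq_Nil [simp]: "evens (x # xs) \<noteq> []"
  by (cases xs) simp_all

lemma evens_snoc: "odd (length l) \<Longrightarrow> evens (l @ [a, b]) = evens l @ [b]"
  by (induction l rule: induct_list012) auto

lemma evens_rev: "odd (length w) \<Longrightarrow> evens (rev w) = rev (evens w)"
  by (induction w rule: induct_list012) (auto simp: evens_snoc)

text \<open>The even positions of a sampled sequence are the walk's vertices after each swap; in this
  form the stopping rule is visibly invariant under reversal (\<open>evens_rev\<close>).\<close>
lemma returns_only_at_end_iff:
  "returns_only_at_end w0 l \<longleftrightarrow> even (length l) \<and> (\<exists>ys. evens (x # l) = x # ys @ [w0] \<and> w0 \<notin> set ys)"
proof (induction w0 l arbitrary: x rule: returns_only_at_end.induct)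
  case (1 w0 a b rest)
  show ?case
  proof (cases rest)
    case Nil
    then show ?thesis by (auto simp: Cons_eq_append_conv)
  next
    case (Cons c rest')
    then show ?thesis using 1[of b] by (cases rest') (auto simp: Cons_eq_append_conv)
  qed
qed auto

lemma returns_only_at_endD:
  "returns_only_at_end w0 l \<Longrightarrow> \<exists>l'. l = l' @ [w0] \<and> odd (length l')"
  by (induction w0 l rule: returns_only_at_end.induct) (auto split: if_splits)

lemma returns_only_at_end_rev:
  assumes "returns_only_at_end w0 l"
  obtains t where "rev (w0 # l) = w0 # t" "returns_only_at_end w0 t"
proof -
  obtain l' where l: "l = l' @ [w0]" "odd (length l')" using returns_only_at_endD[OF assms] by blast
  obtain ys where ys: "evens (w0 # l) = w0 # ys @ [w0]" "w0 \<notin> set ys"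
    using assms returns_only_at_end_iff by metis
  have "evens (w0 # rev l' @ [w0]) = rev (evens (w0 # l))"
    using evens_rev[of "w0 # l"] l by simp
  then have "returns_only_at_end w0 (rev l' @ [w0])"
    using ys l returns_only_at_end_iff[of w0 "rev l' @ [w0]" w0] by simp
  then show ?thesis using that l by simp
qed

lemma step_prob_nonneg: "step_prob d G0 F G p x a b \<ge> 0"
  unfolding step_prob_def Let_def by simp

lemma walk_weight_nonneg: "walk_weight d G0 F G p x l \<ge> 0"
  by (induction d G0 F G p x l rule: walk_weight.induct) (simp_all add: step_prob_nonneg)

lemma Pw_nonneg: "Pw d G0 F G w \<ge> 0"
  unfolding Pw_def by (cases w) (simp_all add: Let_def walkp_eq_walk_weight walk_weight_nonneg)

lemma card_pos_if_mem: "(a::'a::finite) \<in> A \<Longrightarrow> card A > 0"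
  by (auto simp: card_gt_0_iff)

lemma step_prob_pos_iff:
  "step_prob d G0 F G p x a b > 0 \<longleftrightarrow> a \<in> Nset d G0 F G x - set_option p \<and> b \<in> Mset d G0 F G a"
  using card_pos_if_mem[of a "Nset d G0 F G x - set_option p"] card_pos_if_mem[of b "Mset d G0 F G a"]
  unfolding step_prob_def Let_def by auto

lemma step_prob_mult_card:
  assumes "a \<in> Nset d G0 F G x - set_option p" "b \<in> Mset d G0 F G a"
  shows "step_prob d G0 F G p x a b * card (Nset d G0 F G x - set_option p) = 1 / card (Mset d G0 F G a)"
  using card_pos_if_mem[OF assms(1)] card_pos_if_mem[OF assms(2)] assms
  unfolding step_prob_def Let_def by auto

lemma walk_weight_Cons2_pos_iff:
  "walk_weight d G0 F G p x (a # b # rest) > 0 \<longleftrightarrow>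
   step_prob d G0 F G p x a b > 0 \<and> walk_weight d G0 F (swapg d G a x b) (Some a) b rest > 0"
  using step_prob_nonneg[of d G0 F G p x a b] walk_weight_nonneg[of d G0 F "swapg d G a x b" "Some a" b rest]
  by (auto simp: zero_less_mult_iff)

lemma subset_Ftil:
  assumes "\<forall>(u,v)\<in>F. u \<noteq> v"
  shows "F \<subseteq> Ftil d G0 F"
proof
  fix p assume p: "p \<in> F"
  obtain u v where uv: "p = (u,v)" by (cases p)
  have "\<forall>G\<in>Gset d G0 F. (u,v) \<in> G \<longleftrightarrow> (u,v) \<in> G0" using p uv unfolding Gset_def by blast
  then show "p \<in> Ftil d G0 F" using assms p uv unfolding Ftil_def by (cases "(u,v) \<in> G0") auto
qed

lemma Ftil_sym:
  assumes "\<not> d" "(u,v) \<in> Ftil d G0 F"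
  shows "(v,u) \<in> Ftil d G0 F"
proof -
  have "\<And>G. G \<in> Gset d G0 F \<Longrightarrow> (u,v) \<in> G \<longleftrightarrow> (v,u) \<in> G"
    using assms(1) unfolding Gset_def is_graph_def by (auto dest: symD)
  then show ?thesis using assms(2) unfolding Ftil_def by auto
qed

lemma viable_seq_if_walk_weight_pos:
  "F \<subseteq> Ftil d G0 F \<Longrightarrow> walk_weight d G0 F G p x l > 0 \<Longrightarrow> viable_seq d F G (x # l)"
proof (induction d G0 F G p x l rule: walk_weight.induct)
  case (1 d G0 F G p x a b rest)
  then have "viable F G a x a b"
    unfolding walk_weight_Cons2_pos_iff step_prob_pos_iff viable_def Nset_def Mset_def by auto
  with 1 show ?case unfolding walk_weight_Cons2_pos_iff by simp
qed simp_all

lemma sampled_swap_facts: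
  assumes "is_graph d G" "a \<in> Nset d G0 F G x" "b \<in> Mset d G0 F G a"
  shows "(a,x) \<in> G" "(a,x) \<notin> Ftil d G0 F" "(a,b) \<notin> G" "(a,b) \<notin> Ftil d G0 F"
    "a \<noteq> x" "a \<noteq> b" "x \<noteq> b"
  using assms unfolding Nset_def Mset_def is_graph_def by auto

lemma Mset_swapg:
  assumes "is_graph d G" "a \<in> Nset d G0 F G x" "b \<in> Mset d G0 F G a"
  shows "x \<in> Mset d G0 F (swapg d G a x b) a"
    "card (Mset d G0 F (swapg d G a x b) a) = card (Mset d G0 F G a)"
proof -
  note f = sampled_swap_facts[OF assms]
  have "Mset d G0 F (swapg d G a x b) a = insert x (Mset d G0 F G a - {b})"
    using f unfolding Mset_def mem_swapg_iff ekey_def by auto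
  moreover have "x \<notin> Mset d G0 F G a" using f(1) unfolding Mset_def by auto
  ultimately show "x \<in> Mset d G0 F (swapg d G a x b) a"
    "card (Mset d G0 F (swapg d G a x b) a) = card (Mset d G0 F G a)"
    using assms(3) card_pos_if_mem[OF assms(3)] by (simp_all add: card_Diff_singleton)
qed

lemma Nset_swapg:
  assumes "is_graph d G" "a \<in> Nset d G0 F G x" "b \<in> Mset d G0 F G a"
  shows "Nset d G0 F (swapg d G a x b) u =
    (if u = x then Nset d G0 F G u - {a}
     else if u = b then insert a (Nset d G0 F G u)
     else if u = a \<and> \<not> d then insert b (Nset d G0 F G u - {x})
     else Nset d G0 F G u)"
proof (cases d)
  case True
  then show ?thesis using sampled_swap_facts[OF assms]
    unfolding Nset_def mem_swapg_iff ekey_def by auto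
next
  case False
  then have "(x,a) \<in> G" "(b,a) \<notin> G" "(x,a) \<notin> Ftil d G0 F" "(b,a) \<notin> Ftil d G0 F"
    using sampled_swap_facts[OF assms] assms(1) Ftil_sym[of d] unfolding is_graph_def
    by (auto dest: symD)
  then show ?thesis using False sampled_swap_facts[OF assms]
    unfolding Nset_def mem_swapg_iff ekey_def by auto
qed

lemma card_Nset_swapg:
  assumes "is_graph d G" "a \<in> Nset d G0 F G x" "b \<in> Mset d G0 F G a"
  shows "card (Nset d G0 F (swapg d G a x b) u) + of_bool (u = x) =
    card (Nset d G0 F G u) + of_bool (u = b)"
proof -
  note f = sampled_swap_facts[OF assms]
  have "a \<notin> Nset d G0 F G b" using f(3) unfolding Nset_def by simp
  moreover have "x \<in> Nset d G0 F G a" "b \<notin> Nset d G0 F G a" if "\<not> d"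
    using that f(1-4) assms(1) Ftil_sym[of d] unfolding Nset_def is_graph_def by (auto dest: symD)
  ultimately show ?thesis
    using Nset_swapg[OF assms, of u] f assms(2) card_pos_if_mem[OF assms(2)]
      card_pos_if_mem[of x "Nset d G0 F G a"]
    by (auto simp: card_Diff_singleton card_insert_if)
qed

lemma card_Nset_apply_swaps:
  "is_graph d G \<Longrightarrow> walk_weight d G0 F G p x l > 0 \<Longrightarrow> even (length l) \<Longrightarrow>
   card (Nset d G0 F (apply_swaps d G (x # l)) u) + of_bool (u = x) =
   card (Nset d G0 F G u) + of_bool (u = last (x # l))"
proof (induction d G0 F G p x l rule: walk_weight.induct)
  case (1 d G0 F G p x a b rest)
  then have a: "a \<in> Nset d G0 F G x" and b: "b \<in> Mset d G0 F G a"
    and pos: "walk_weight d G0 F (swapg d G a x b) (Some a) b rest > 0"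
    unfolding walk_weight_Cons2_pos_iff step_prob_pos_iff by auto
  have "is_graph d (swapg d G a x b)"
    using is_graph_swapg[OF 1(2)] sampled_swap_facts[OF 1(2) a b] by simp
  then show ?case using 1(1)[OF _ pos] 1(4) card_Nset_swapg[OF 1(2) a b, of u] by simp
qed simp_all

corollary card_Nset_apply_swaps_closed:
  "is_graph d G \<Longrightarrow> walk_weight d G0 F G p x l > 0 \<Longrightarrow> even (length l) \<Longrightarrow> last (x # l) = x \<Longrightarrow>
   card (Nset d G0 F (apply_swaps d G (x # l)) u) = card (Nset d G0 F G u)"
  using card_Nset_apply_swaps[of d G G0 F p x l u] by simp

lemma walk_weight_append_pair:
  "even (length l) \<Longrightarrow>
   walk_weight d G0 F G p x (l @ [a, b, c, e]) =
   walk_weight d G0 F G p x (l @ [a, b]) * step_prob d G0 F (apply_swaps d G (x # l @ [a, b])) (Some a) b c e"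
  by (induction d G0 F G p x l rule: walk_weight.induct) simp_all

lemma walk_weight_rev_snoc:
  assumes "is_graph d G" "viable_seq d F G (b # rest)" "even (length rest)"
  defines "H \<equiv> apply_swaps d G (b # rest)"
  shows "walk_weight d G0 F H None (last (b # rest)) (tl (rev (b # rest)) @ [a, x]) =
    walk_weight d G0 F H None (last (b # rest)) (tl (rev (b # rest))) *
    step_prob d G0 F G (case rest of [] \<Rightarrow> None | c # _ \<Rightarrow> Some c) b a x"
proof (cases rest)
  case Nil
  then show ?thesis unfolding H_def by simp
next
  case (Cons c rest')
  then obtain e rest'' where rest': "rest' = e # rest''" using assms(3) by (cases rest') auto
  obtain y R where yR: "rev (e # rest'') = y # R" by (cases "rev (e # rest'')") auto
  have rev: "rev (b # rest) = y # R @ [c, b]" using yR Cons rest' by simp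
  have "even (length R)" using assms(3) Cons rest' arg_cong[OF yR, of length] by simp
  moreover have "odd (length (b # rest))" using assms(3) by simp
  then have "apply_swaps d H (y # R @ [c, b]) = G"
    using apply_swaps_reverse[OF _ assms(1,2)] rev unfolding H_def by metis
  moreover have "last (b # rest) = y" "tl (rev (b # rest)) = R @ [c, b]"
    using rev by (metis hd_rev list.sel(1), simp)
  ultimately show ?thesis using walk_weight_append_pair[of R d G0 F H None y c b a x] Cons by simp
qed

text \<open>The reversed walk undoes the same swaps in opposite order. Its factors \<open>1 / |M|\<close> agree
  with the forward ones by \<open>Mset_swapg\<close>; at each intermediate vertex both walks exclude a
  neighbour that lies in the same set \<open>N\<close>, so the factors \<open>1 / |N - {_}|\<close> agree as well. Only the
  two initial factors differ, which is what the multipliers compensate.\<close>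
lemma walk_weight_rev:
  "F \<subseteq> Ftil d G0 F \<Longrightarrow> is_graph d G \<Longrightarrow> walk_weight d G0 F G p x t > 0 \<Longrightarrow> t \<noteq> [] \<Longrightarrow>
   even (length t) \<Longrightarrow>
   walk_weight d G0 F G p x t * card (Nset d G0 F G x - set_option p) =
   walk_weight d G0 F (apply_swaps d G (x # t)) None (last (x # t)) (tl (rev (x # t))) *
     card (Nset d G0 F (apply_swaps d G (x # t)) (last (x # t)))"
proof (induction d G0 F G p x t rule: walk_weight.induct)
  case (1 d G0 F G p x a b rest)
  define G1 where "G1 = swapg d G a x b"
  define A where "A = walk_weight d G0 F G1 (Some a) b rest"
  define H where "H = apply_swaps d G1 (b # rest)"
  define y where "y = last (b # rest)"
  define R where "R = tl (rev (b # rest))"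
  define q where "q = (case rest of [] \<Rightarrow> None | c # _ \<Rightarrow> Some c)"
  have a: "a \<in> Nset d G0 F G x - set_option p" and b: "b \<in> Mset d G0 F G a" and A: "A > 0"
    using 1(4) unfolding walk_weight_Cons2_pos_iff step_prob_pos_iff A_def G1_def by auto
  then have a0: "a \<in> Nset d G0 F G x" by simp
  note f = sampled_swap_facts[OF 1(3) a0 b] and M = Mset_swapg[OF 1(3) a0 b, folded G1_def]
  have G1: "is_graph d G1" using is_graph_swapg[OF 1(3) f(6)] unfolding G1_def .
  have a1: "a \<in> Nset d G0 F G1 b"
    using f unfolding G1_def Nset_def mem_swapg_iff ekey_def by auto
  have fwd: "walk_weight d G0 F G p x (a # b # rest) * card (Nset d G0 F G x - set_option p) =
      A / card (Mset d G0 F G a)"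
  proof -
    have "walk_weight d G0 F G p x (a # b # rest) * card (Nset d G0 F G x - set_option p) =
        A * (step_prob d G0 F G p x a b * card (Nset d G0 F G x - set_option p))"
      unfolding A_def G1_def by (simp add: mult_ac)
    then show ?thesis using step_prob_mult_card[OF a b] by simp
  qed
  have rev_head: "a \<in> Nset d G0 F G1 b - set_option q \<and>
      walk_weight d G0 F H None y R * card (Nset d G0 F H y) = A * card (Nset d G0 F G1 b - set_option q)"
  proof (cases rest)
    case Nil
    then show ?thesis using a1 unfolding A_def H_def y_def R_def q_def by simp
  next
    case (Cons c rest')
    then obtain e rest'' where rest': "rest' = e # rest''" using 1(6) by (cases rest') auto
    have c: "c \<in> Nset d G0 F G1 b - {a}"
      using A unfolding A_def Cons rest' walk_weight_Cons2_pos_iff step_prob_pos_iff by simp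
    have "A * card (Nset d G0 F G1 b - {a}) = walk_weight d G0 F H None y R * card (Nset d G0 F H y)"
      using 1(1)[OF 1(2) G1[unfolded G1_def] A[unfolded A_def G1_def]] 1(6) Cons
      unfolding A_def H_def y_def R_def G1_def by simp
    moreover have "card (Nset d G0 F G1 b - {a}) = card (Nset d G0 F G1 b - {c})"
      using a1 c by (simp add: card_Diff_singleton)
    moreover have "a \<in> Nset d G0 F G1 b - {c}" using a1 c by blast
    ultimately show ?thesis unfolding q_def Cons by simp
  qed
  have "viable_seq d F G1 (b # rest)"
    using viable_seq_if_walk_weight_pos[OF 1(2) A[unfolded A_def]] .
  then have bwd: "walk_weight d G0 F H None y (R @ [a, x]) =
      walk_weight d G0 F H None y R * step_prob d G0 F G1 q b a x"
    using walk_weight_rev_snoc[OF G1 _ ] 1(6) unfolding H_def y_def R_def q_def by simp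
  have "step_prob d G0 F G1 q b a x * card (Nset d G0 F G1 b - set_option q) = 1 / card (Mset d G0 F G a)"
    using step_prob_mult_card[OF conjunct1[OF rev_head] M(1)] M(2) by simp
  then have "walk_weight d G0 F H None y (R @ [a, x]) * card (Nset d G0 F H y) = A / card (Mset d G0 F G a)"
    unfolding bwd using conjunct2[OF rev_head] by (metis mult.assoc mult.commute times_divide_eq_right mult_1_right)
  moreover have "apply_swaps d G (x # a # b # rest) = H" "last (x # a # b # rest) = y"
    unfolding H_def G1_def y_def by simp_all
  moreover have "tl (rev (x # a # b # rest)) = R @ [a, x]"
    using tl_append2[of "rev (b # rest)" "[a, x]"] unfolding R_def by simp
  ultimately show ?case using fwd by simp
qed simp_all

lemma Pw_Cons:
  "Pw d G0 F G (w0 # l) =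
   of_bool (Nset d G0 F G w0 \<noteq> {}) / card {v. Nset d G0 F G v \<noteq> {}} *
   (of_bool (returns_only_at_end w0 l) * walk_weight d G0 F G None w0 l)"
  unfolding Pw_def by (simp add: Let_def walkp_eq_walk_weight)

lemma Pw_Cons_pos_iff:
  "Pw d G0 F G (w0 # l) > 0 \<longleftrightarrow>
   Nset d G0 F G w0 \<noteq> {} \<and> returns_only_at_end w0 l \<and> walk_weight d G0 F G None w0 l > 0"
proof -
  have "Nset d G0 F G w0 \<noteq> {} \<Longrightarrow> real (card {v. Nset d G0 F G v \<noteq> {}}) > 0"
    using card_pos_if_mem[of w0 "{v. Nset d G0 F G v \<noteq> {}}"] by simp
  then show ?thesis using walk_weight_nonneg[of d G0 F G None w0 l]
    unfolding Pw_Cons by (auto simp: zero_less_mult_iff zero_less_divide_iff)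
qed

lemma viable_seq_if_Pw_pos:
  assumes "F \<subseteq> Ftil d G0 F" "Pw d G0 F G w > 0"
  shows "viable_seq d F G w"
proof (cases w)
  case Nil
  then show ?thesis using assms(2) unfolding Pw_def by simp
next
  case (Cons w0 l)
  then have "walk_weight d G0 F G None w0 l > 0" using assms(2) unfolding Cons Pw_Cons_pos_iff by simp
  then show ?thesis using viable_seq_if_walk_weight_pos[OF assms(1)] Cons by simp
qed

lemma Pw_eq_0_if_not_viable:
  assumes "F \<subseteq> Ftil d G0 F" "\<not> viable_seq d F G w"
  shows "Pw d G0 F G w = 0"
  using viable_seq_if_Pw_pos[OF assms(1)] assms(2) Pw_nonneg[of d G0 F G w] by force

lemma Pw_rev_apply_swaps_if_pos:
  assumes "F \<subseteq> Ftil d G0 F" "is_graph d G" "Pw d G0 F G w > 0"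
  shows "Pw d G0 F G w = Pw d G0 F (apply_swaps d G w) (rev w)"
proof -
  obtain w0 l where w: "w = w0 # l" using assms(3) unfolding Pw_def by (cases w) auto
  define H where "H = apply_swaps d G w"
  have N: "Nset d G0 F G w0 \<noteq> {}" and ret: "returns_only_at_end w0 l"
    and pos: "walk_weight d G0 F G None w0 l > 0"
    using assms(3) unfolding w Pw_Cons_pos_iff by auto
  obtain l' where l: "l = l' @ [w0]" "odd (length l')" using returns_only_at_endD[OF ret] by blast
  then have closed: "l \<noteq> []" "even (length l)" "last (w0 # l) = w0" by simp_all
  have deg: "card (Nset d G0 F H u) = card (Nset d G0 F G u)" for u
    using card_Nset_apply_swaps_closed[OF assms(2) pos closed(2,3)] unfolding H_def w .
  then have nonempty: "Nset d G0 F H u \<noteq> {} \<longleftrightarrow> Nset d G0 F G u \<noteq> {}" for u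
    by (metis card_0_eq finite)
  obtain t where t: "rev w = w0 # t" "returns_only_at_end w0 t"
    using returns_only_at_end_rev[OF ret] unfolding w by blast
  have "walk_weight d G0 F G None w0 l * card (Nset d G0 F G w0) =
      walk_weight d G0 F H None w0 t * card (Nset d G0 F H w0)"
    using walk_weight_rev[OF assms(1,2) pos closed(1,2)] t(1) closed(3) unfolding H_def w by simp
  then have "walk_weight d G0 F G None w0 l = walk_weight d G0 F H None w0 t"
    using deg[of w0] N by (simp add: card_eq_0_iff)
  moreover have "{v. Nset d G0 F H v \<noteq> {}} = {v. Nset d G0 F G v \<noteq> {}}" using nonempty by blast
  ultimately have "Pw d G0 F H (w0 # t) = Pw d G0 F G (w0 # l)"
    unfolding Pw_Cons using ret t(2) nonempty[of w0] by simp
  then show ?thesis using t(1) w by (simp add: H_def)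
qed

lemma Pw_rev_apply_swaps:
  assumes "F \<subseteq> Ftil d G0 F" "is_graph d G" "w \<in> Wset" "viable_seq d F G w"
  shows "Pw d G0 F G w = Pw d G0 F (apply_swaps d G w) (rev w)"
proof -
  define H where "H = apply_swaps d G w"
  note R = apply_swaps_reverse[OF odd_length_Wset[OF assms(3)] assms(2,4), folded H_def]
  consider "Pw d G0 F G w > 0" | "Pw d G0 F H (rev w) > 0" | "Pw d G0 F G w = 0" "Pw d G0 F H (rev w) = 0"
    using Pw_nonneg[of d G0 F G w] Pw_nonneg[of d G0 F H "rev w"] by linarith
  then show ?thesis
  proof cases
    case 1
    then show ?thesis using Pw_rev_apply_swaps_if_pos[OF assms(1,2)] unfolding H_def by blast
  next
    case 2
    then show ?thesis using Pw_rev_apply_swaps_if_pos[OF assms(1) _ 2] R unfolding H_def by simp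
  qed (simp add: H_def)
qed

lemma Vp_eq_if_Kz_pos:
  assumes "F \<subseteq> Ftil d G0 F" "is_graph d G" "z \<in> Zset" "Kz d F z G G' > 0"
  shows "Vp d G0 F G z = Vp d G0 F G' z"
proof (cases "G' = G")
  case False
  have "Kmap_w d F (SOME w. w \<in> z) G = G'" using assms(4) unfolding Kz_def by (simp split: if_splits)
  then obtain v where v: "v \<in> z" "viable_seq d F G v" "G' = apply_swaps d G v"
    using Kmap_w_cases[OF assms(3)] False by metis
  note vW = Zset_memD(1)[OF assms(3) v(1)] and z = Zset_memD(2)[OF assms(3) v(1)]
  have odd: "odd (length v)" using odd_length_Wset[OF vW] .
  have "Pw d G0 F G v = Pw d G0 F G' (rev v)"
    using Pw_rev_apply_swaps[OF assms(1,2) vW v(2)] v(3) by simp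
  moreover have "Pw d G0 F G (rev v) = 0"
  proof (rule Pw_eq_0_if_not_viable[OF assms(1)])
    show "\<not> viable_seq d F G (rev v)"
      using apply_swaps_eq_self_if_viable_rev[OF odd assms(2) v(2)] v(3) False by auto
  qed
  moreover have "Pw d G0 F G' v = 0"
  proof (rule Pw_eq_0_if_not_viable[OF assms(1)])
    show "\<not> viable_seq d F G' v"
      using apply_swaps_eq_self_if_viable_twice[OF odd assms(2) v(2)] v(3) False by auto
  qed
  ultimately show ?thesis unfolding Vp_def z by (cases "rev v = v") auto
qed simp

section \<open>The decomposition\<close>

lemma infsum_Union_finite_nonneg:
  fixes f :: "'a \<Rightarrow> real"
  assumes "\<And>x. x \<in> \<Union>Z \<Longrightarrow> f x \<ge> 0" "\<And>z. z \<in> Z \<Longrightarrow> finite z" "disjoint_family_on (\<lambda>z. z) Z"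
  shows "infsum f (\<Union>Z) = infsum (\<lambda>z. sum f z) Z"
proof -
  have inj: "inj_on snd (Sigma Z (\<lambda>z. z))"
    using assms(3) unfolding disjoint_family_on_def inj_on_def by auto
  have im: "snd ` Sigma Z (\<lambda>z. z) = \<Union>Z" by force
  show ?thesis
  proof (cases "f summable_on (\<Union>Z)")
    case True
    then have "(f \<circ> snd) summable_on (Sigma Z (\<lambda>z. z))"
      using summable_on_reindex[OF inj, of f] unfolding im by simp
    then have "infsum (f \<circ> snd) (Sigma Z (\<lambda>z. z)) = infsum (\<lambda>z. infsum f z) Z"
      using infsum_Sigma_banach by fastforce
    also have "\<dots> = infsum (\<lambda>z. sum f z) Z" using assms(2) by (intro infsum_cong) simp
    finally show ?thesis using infsum_reindex[OF inj, of f] unfolding im by simp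
  next
    case False
    moreover have "(\<lambda>z. sum f z) summable_on Z \<Longrightarrow> f summable_on (\<Union>Z)"
      using summable_on_Union_iff[of Z f "\<lambda>z. z" "sum f"] assms by auto
    ultimately show ?thesis by (metis infsum_not_exists)
  qed
qed

lemma Qk_decomposition:
  assumes "F \<subseteq> Ftil d G0 F" "is_graph d G"
  shows "Qk d G0 F G G' = (\<Sum>\<^sub>\<infinity> z\<in>Zset. Vp d G0 F G z * Kz d F z G G')"
proof -
  define f where "f w = Pw d G0 F G w * of_bool (apply_swaps d G w = G')" for w
  have class_sum: "Vp d G0 F G z * Kz d F z G G' = sum f z" if z: "z \<in> Zset" for z
  proof -
    have "Pw d G0 F G w * of_bool (Kmap_w d F (SOME w. w \<in> z) G = G') = f w" if "w \<in> z" for w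
    proof (cases "viable_seq d F G w")
      case True
      have "(SOME w. w \<in> z) \<in> {w, rev w}" using some_mem_Zset[OF z] Zset_memD(2)[OF z \<open>w \<in> z\<close>] by simp
      then show ?thesis using Kmap_w_viable[OF odd_length_Wset[OF Zset_memD(1)[OF z \<open>w \<in> z\<close>]] assms(2) True]
        unfolding f_def by auto
    qed (simp add: f_def Pw_eq_0_if_not_viable[OF assms(1)])
    then show ?thesis unfolding Vp_def Kz_def by (simp add: sum_distrib_right)
  qed
  have "Qk d G0 F G G' = infsum f (\<Union>Zset)" unfolding Qk_def f_def Wset_eq_Union_Zset ..
  also have "\<dots> = infsum (\<lambda>z. sum f z) Zset"
    using infsum_Union_finite_nonneg[OF _ finite_Zset_mem disjoint_Zset, of f] Pw_nonneg[of d G0 F G]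
    unfolding f_def by simp
  also have "\<dots> = (\<Sum>\<^sub>\<infinity> z\<in>Zset. Vp d G0 F G z * Kz d F z G G')"
    using class_sum by (intro infsum_cong) simp
  finally show ?thesis .
qed

theorem lemma2:
  fixes d :: bool and G0 F :: "('v::finite \<times> 'v) set"
  assumes "is_graph d G0"
    and "\<forall>(u,v)\<in>F. u \<noteq> v"
    and "\<not> d \<longrightarrow> sym F"
  shows "(\<forall>G\<in>Gset d G0 F. \<forall>G'. Qk d G0 F G G' = (\<Sum>\<^sub>\<infinity> z\<in>Zset. Vp d G0 F G z * Kz d F z G G'))
       \<and> (\<forall>G\<in>Gset d G0 F. \<forall>z\<in>Zset. \<forall>G'. Kz d F z G G' > 0 \<longrightarrow> Vp d G0 F G z = Vp d G0 F G' z)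
       \<and> (\<forall>z\<in>Zset. \<forall>G\<in>Gset d G0 F. \<forall>G'\<in>Gset d G0 F. Kz d F z G G' = Kz d F z G' G)"
proof -
  have F: "F \<subseteq> Ftil d G0 F" using subset_Ftil[OF assms(2)] .
  have graph: "is_graph d G" if "G \<in> Gset d G0 F" for G using that unfolding Gset_def by simp
  show ?thesis
  proof (intro conjI ballI allI impI)
    fix G G' assume "G \<in> Gset d G0 F"
    then show "Qk d G0 F G G' = (\<Sum>\<^sub>\<infinity> z\<in>Zset. Vp d G0 F G z * Kz d F z G G')"
      by (intro Qk_decomposition[OF F] graph)
  next
    fix G z G' assume "G \<in> Gset d G0 F" "z \<in> Zset" "Kz d F z G G' > 0"
    then show "Vp d G0 F G z = Vp d G0 F G' z" by (intro Vp_eq_if_Kz_pos[OF F] graph)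
  next
    fix z :: "'v list set" and G G' assume "z \<in> Zset" "G \<in> Gset d G0 F" "G' \<in> Gset d G0 F"
    then show "Kz d F z G G' = Kz d F z G' G" by (intro Kz_sym graph)
  qed
qed

end
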